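(* Let $p$ be a prime and let $G_1,\ldots,G_n$ be finite groups. Then \[ 1-\chi\big(\mathcal F^*_{\prod_{i=1}^nG_i}\big)=\prod_{i=1}^n\big(1-\chi(\mathcal F^*_{G_i})\big). \]
   Context: For a finite group $X$, $\mathcal F^*_X$ is the category whose objects are the nonidentity $p$-subgroups of $X$ and whose morphism sets are $\mathcal F^*_X(H,K)=C_X(H)\backslash N_X(H,K)$, where $N_X(H,K)=\{g\in X: g^{-1}Hg\le K\}$, with composition induced by multiplication in $X$. Leinster Euler characteristic: for a finite category $\mathcal C$ let $\zeta(a,b)=|\mathcal C(a,b)|$; a weighting is $k^\bullet:\mathrm{Ob}(\mathcal C)\to\mathbb Q$ with $\sum_b\zeta(a,b)k^b=1$ for all $a$, a coweighting is $k_\bullet$ with $\sum_ak_a\zeta(a,b)=1$ for all $b$; if both exist, $\chi(\mathcal C)=\sum_bk^b=\sum_ak_a$. *)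

theory Defs
  imports "HOL-Algebra.Algebra"
begin

text \<open>A finite category is represented by its finite set of objects Ob and its
  zeta function z a b = number of morphisms a \<rightarrow> b.\<close>

definition is_weighting :: "'o set \<Rightarrow> ('o \<Rightarrow> 'o \<Rightarrow> nat) \<Rightarrow> ('o \<Rightarrow> rat) \<Rightarrow> bool" where
  "is_weighting Ob z k \<longleftrightarrow> (\<forall>a\<in>Ob. (\<Sum>b\<in>Ob. of_nat (z a b) * k b) = 1)"

definition is_coweighting :: "'o set \<Rightarrow> ('o \<Rightarrow> 'o \<Rightarrow> nat) \<Rightarrow> ('o \<Rightarrow> rat) \<Rightarrow> bool" where
  "is_coweighting Ob z k \<longleftrightarrow> (\<forall>b\<in>Ob. (\<Sum>a\<in>Ob. k a * of_nat (z a b)) = 1)"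

text \<open>The Euler characteristic: defined when both a weighting and a coweighting exist,
  as the total weight of a weighting (independent of the choice).\<close>
definition euler_char :: "'o set \<Rightarrow> ('o \<Rightarrow> 'o \<Rightarrow> nat) \<Rightarrow> rat" where
  "euler_char Ob z =
     (if (\<exists>k. is_weighting Ob z k) \<and> (\<exists>k. is_coweighting Ob z k)
      then (\<Sum>b\<in>Ob. (SOME k. is_weighting Ob z k) b) else 0)"

definition nonid_p_subgroups :: "nat \<Rightarrow> ('a, 'b) monoid_scheme \<Rightarrow> 'a set set" where
  "nonid_p_subgroups p Gr =
     {H. subgroup H Gr \<and> (\<exists>k. card H = p ^ k) \<and> H \<noteq> {one Gr}}"

definition transporter :: "('a, 'b) monoid_scheme \<Rightarrow> 'a set \<Rightarrow> 'a set \<Rightarrow> 'a set" where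
  "transporter Gr H K =
     {g \<in> carrier Gr. (\<lambda>h. monoid.mult Gr (monoid.mult Gr (m_inv Gr g) h) g) ` H \<subseteq> K}"

definition centralizer :: "('a, 'b) monoid_scheme \<Rightarrow> 'a set \<Rightarrow> 'a set" where
  "centralizer Gr H = {g \<in> carrier Gr. \<forall>h\<in>H. monoid.mult Gr g h = monoid.mult Gr h g}"

text \<open>Morphism set C_X(H)\N_X(H,K): the orbits C_X(H) g, g \<in> N_X(H,K).\<close>
definition Fstar_hom :: "('a, 'b) monoid_scheme \<Rightarrow> 'a set \<Rightarrow> 'a set \<Rightarrow> 'a set set" where
  "Fstar_hom Gr H K = (\<lambda>g. r_coset Gr (centralizer Gr H) g) ` transporter Gr H K"

definition Fstar_zeta :: "('a, 'b) monoid_scheme \<Rightarrow> 'a set \<Rightarrow> 'a set \<Rightarrow> nat" where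
  "Fstar_zeta Gr H K = card (Fstar_hom Gr H K)"

definition chi_Fstar :: "nat \<Rightarrow> ('a, 'b) monoid_scheme \<Rightarrow> rat" where
  "chi_Fstar p Gr = euler_char (nonid_p_subgroups p Gr) (Fstar_zeta Gr)"

end

theory Submission
  imports Defs "HOL-Library.Dual_Ordered_Lattice"
begin

text \<open>Write n = |G| and c(H) = |C_G(H)|. Since the transporter N_G(H,K) is a union of
  C_G(H)-cosets, \<zeta>(H,K) = #{g. H^g \<le> K} / c(H). Hence any k with upper sums
  \<Sum>_{K \<ge> H} k(K) = c(H)/n is a weighting of F*_G, and if \<mu> is the Moebius function
  of the poset of all p-subgroups at the trivial subgroup, then -\<mu>(H) c(H)/n is a coweighting.
  Moebius inversion then gives 1 - \<chi>(F*_G) = \<rho>(1)/n for every \<rho> whose upper sums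
  \<Sum>_{B \<ge> A} \<rho>(B) are c(A).

  For X = \<Prod> G_i such a \<rho> is obtained from the \<rho>_i: put \<rho>(\<Prod> B_i) = \<Prod> \<rho>_i(B_i) on box
  subgroups and 0 elsewhere. A p-subgroup L lies in a box \<Prod> B_i iff each projection of L
  lies in B_i, and C_X(L) = \<Prod> C_{G_i}(proj_i L), so the upper sums factor; evaluating
  at the trivial subgroup gives the product formula.\<close>

section \<open>Triangular systems on finite posets\<close>

lemma ex_upper_sums_eq:
  fixes f :: "'x::order \<Rightarrow> 'r::ab_group_add"
  assumes "finite S"
  shows "\<exists>k. \<forall>x\<in>S. (\<Sum>y\<in>{y\<in>S. x \<le> y}. k y) = f x"
  using assms
proof (induction "card S" arbitrary: S rule: less_induct)
  case less
  show ?case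
  proof (cases "S = {}")
    case False
    obtain m where m: "m \<in> S" "\<forall>y\<in>S. y \<le> m \<longrightarrow> m = y"
      using finite_has_minimal[OF less.prems False] by blast
    let ?S = "S - {m}"
    have "card ?S < card S" using m(1) less.prems by (meson card_Diff1_less)
    then obtain k where k: "\<forall>x\<in>?S. (\<Sum>y\<in>{y\<in>?S. x \<le> y}. k y) = f x"
      using less.hyps less.prems by blast
    define k' where "k' = k(m := f m - (\<Sum>y\<in>{y\<in>?S. m \<le> y}. k y))"
    have agree: "(\<Sum>y\<in>{y\<in>?S. x \<le> y}. k' y) = (\<Sum>y\<in>{y\<in>?S. x \<le> y}. k y)" for x
      by (rule sum.cong) (auto simp: k'_def)
    have "(\<Sum>y\<in>{y\<in>S. x \<le> y}. k' y) = f x" if x: "x \<in> S" for x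
    proof (cases "x = m")
      case True
      have "{y\<in>S. m \<le> y} = insert m {y\<in>?S. m \<le> y}" using m by auto
      then show ?thesis using True less.prems agree[of m] by (simp add: k'_def)
    next
      case False
      have "{y\<in>S. x \<le> y} = {y\<in>?S. x \<le> y}" using m x False by auto
      then show ?thesis using agree[of x] k x False by auto
    qed
    then show ?thesis by blast
  qed simp
qed

lemma ex_lower_sums_eq:
  fixes f :: "'x::order \<Rightarrow> 'r::ab_group_add"
  assumes "finite S"
  shows "\<exists>k. \<forall>x\<in>S. (\<Sum>y\<in>{y\<in>S. y \<le> x}. k y) = f x"
proof -
  obtain k where k: "\<forall>x\<in>dual ` S. (\<Sum>y\<in>{y\<in>dual ` S. x \<le> y}. k y) = f (undual x)"
    using ex_upper_sums_eq[of "dual ` S" "f \<circ> undual"] assms by auto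
  have "(\<Sum>y\<in>{y\<in>S. y \<le> x}. k (dual y)) = f x" if "x \<in> S" for x
  proof -
    have "{y\<in>dual ` S. dual x \<le> y} = dual ` {y\<in>S. y \<le> x}" by auto
    then show ?thesis
      using k that sum.reindex[OF inj_on_subset[OF inj_dual], of _ k] by auto
  qed
  then show ?thesis by blast
qed

lemma sum_moebius_mult_upper_sum:
  fixes \<mu> \<psi> :: "'x::order \<Rightarrow> 'r::comm_ring_1"
  assumes S: "finite S" and x0: "x0 \<in> S"
    and \<mu>: "\<forall>y\<in>S. (\<Sum>x\<in>{x\<in>S. x \<le> y}. \<mu> x) = (if y = x0 then 1 else 0)"
  shows "(\<Sum>x\<in>S. \<mu> x * (\<Sum>y\<in>{y\<in>S. x \<le> y}. \<psi> y)) = \<psi> x0"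
proof -
  have "(\<Sum>x\<in>S. \<mu> x * (\<Sum>y\<in>{y\<in>S. x \<le> y}. \<psi> y)) = (\<Sum>x\<in>S. \<Sum>y | y \<in> S \<and> x \<le> y. \<mu> x * \<psi> y)"
    by (simp add: sum_distrib_left)
  also have "\<dots> = (\<Sum>y\<in>S. \<Sum>x | x \<in> S \<and> x \<le> y. \<mu> x * \<psi> y)"
    by (rule sum.swap_restrict[OF S S])
  also have "\<dots> = (\<Sum>y\<in>S. (\<Sum>x\<in>{x\<in>S. x \<le> y}. \<mu> x) * \<psi> y)"
    by (simp add: sum_distrib_right)
  also have "\<dots> = (\<Sum>y\<in>S. if y = x0 then \<psi> y else 0)"
    using \<mu> by (intro sum.cong) auto
  also have "\<dots> = \<psi> x0"
    using S x0 by simp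
  finally show ?thesis .
qed

lemma moebius_bottom:
  fixes \<mu> :: "'x::order \<Rightarrow> 'r::comm_ring_1"
  assumes S: "finite S" and x0: "x0 \<in> S" "\<forall>y\<in>S. x0 \<le> y"
    and \<mu>: "\<forall>y\<in>S. (\<Sum>x\<in>{x\<in>S. x \<le> y}. \<mu> x) = (if y = x0 then 1 else 0)"
  shows moebius_bottom_eq_1: "\<mu> x0 = 1"
    and sum_moebius_above_bottom: "y \<in> S - {x0} \<Longrightarrow> (\<Sum>x\<in>{x\<in>S - {x0}. x \<le> y}. \<mu> x) = -1"
proof -
  have "{x\<in>S. x \<le> x0} = {x0}" using x0 by (auto intro: order.antisym)
  then show \<mu>0: "\<mu> x0 = 1" using \<mu> x0 by force
  assume y: "y \<in> S - {x0}"
  have "{x\<in>S. x \<le> y} = insert x0 {x\<in>S - {x0}. x \<le> y}" using y x0 by auto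
  then have "(\<Sum>x\<in>{x\<in>S. x \<le> y}. \<mu> x) = \<mu> x0 + (\<Sum>x\<in>{x\<in>S - {x0}. x \<le> y}. \<mu> x)"
    using S by simp
  then show "(\<Sum>x\<in>{x\<in>S - {x0}. x \<le> y}. \<mu> x) = -1" using \<mu> y \<mu>0 by (simp add: eq_neg_iff_add_eq_0 add.commute)
qed

lemma sum_weighting_eq_sum_coweighting:
  assumes "finite Ob" "is_weighting Ob z k" "is_coweighting Ob z k'"
  shows "sum k Ob = sum k' Ob"
proof -
  have "sum k Ob = (\<Sum>b\<in>Ob. (\<Sum>a\<in>Ob. k' a * of_nat (z a b)) * k b)"
    using assms(3) unfolding is_coweighting_def by simp
  also have "\<dots> = (\<Sum>b\<in>Ob. \<Sum>a\<in>Ob. k' a * (of_nat (z a b) * k b))"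
    by (simp add: sum_distrib_right mult.assoc)
  also have "\<dots> = (\<Sum>a\<in>Ob. k' a * (\<Sum>b\<in>Ob. of_nat (z a b) * k b))"
    by (subst sum.swap) (simp add: sum_distrib_left)
  also have "\<dots> = sum k' Ob"
    using assms(2) unfolding is_weighting_def by simp
  finally show ?thesis .
qed

lemma euler_char_eqI:
  assumes "finite Ob" "is_weighting Ob z k" "is_coweighting Ob z k'"
  shows "euler_char Ob z = sum k' Ob"
proof -
  have "is_weighting Ob z (SOME k. is_weighting Ob z k)"
    using assms(2) by (rule someI[of "is_weighting Ob z"])
  then show ?thesis
    unfolding euler_char_def using assms sum_weighting_eq_sum_coweighting by auto
qed

lemma sum_card_filter_mult:
  fixes k :: "'b \<Rightarrow> 'r::comm_semiring_1"
  assumes "finite A" "finite B"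
  shows "(\<Sum>b\<in>B. of_nat (card {a\<in>A. P a b}) * k b) = (\<Sum>a\<in>A. \<Sum>b\<in>{b\<in>B. P a b}. k b)"
proof -
  have "(\<Sum>b\<in>B. of_nat (card {a\<in>A. P a b}) * k b) = (\<Sum>b\<in>B. \<Sum>a | a \<in> A \<and> P a b. k b)"
    by simp
  also have "\<dots> = (\<Sum>a\<in>A. \<Sum>b | b \<in> B \<and> P a b. k b)"
    using sum.swap_restrict[OF assms(2,1), of "\<lambda>b a. k b" "\<lambda>b a. P a b"] by simp
  finally show ?thesis by simp
qed

section \<open>The Euler characteristic of F* via upper sums of centralizer orders\<close>

definition p_subgroups :: "nat \<Rightarrow> ('a, 'b) monoid_scheme \<Rightarrow> 'a set set" where
  "p_subgroups p G = {H. subgroup H G \<and> (\<exists>k. card H = p ^ k)}"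

lemma nonid_p_subgroups_eq: "nonid_p_subgroups p G = p_subgroups p G - {{\<one>\<^bsub>G\<^esub>}}"
  unfolding nonid_p_subgroups_def p_subgroups_def by auto

lemma finite_p_subgroups: "finite (carrier G) \<Longrightarrow> finite (p_subgroups p G)"
  by (rule finite_subset[of _ "Pow (carrier G)"]) (auto simp: p_subgroups_def dest: subgroup.subset)

lemma (in group) trivial_in_p_subgroups: "{\<one>} \<in> p_subgroups p G"
  unfolding p_subgroups_def using triv_subgroup by (auto intro: exI[of _ 0])

definition conjugate :: "('a, 'b) monoid_scheme \<Rightarrow> 'a \<Rightarrow> 'a set \<Rightarrow> 'a set" where
  "conjugate G g H = (\<lambda>h. inv\<^bsub>G\<^esub> g \<otimes>\<^bsub>G\<^esub> h \<otimes>\<^bsub>G\<^esub> g) ` H"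

lemma transporter_eq: "transporter G H K = {g \<in> carrier G. conjugate G g H \<subseteq> K}"
  by (simp add: transporter_def conjugate_def)

lemma (in group) conjugation_iso:
  assumes g: "g \<in> carrier G"
  shows "(\<lambda>x. inv g \<otimes> x \<otimes> g) \<in> iso G G"
proof -
  have "g \<otimes> (inv g \<otimes> z) = z" if "z \<in> carrier G" for z
    using g that by (simp add: m_assoc[symmetric])
  then have "(\<lambda>x. inv g \<otimes> x \<otimes> g) \<in> hom G G"
    using g by (auto simp: hom_def m_assoc)
  moreover have "bij_betw (\<lambda>x. inv g \<otimes> x \<otimes> g) (carrier G) (carrier G)"
    using conjugation_is_bij[OF inv_closed[OF g]] g by (simp add: bij_betw_def inj_on_def image_def)
  ultimately show ?thesis by (simp add: iso_def)
qed

lemma iso_image_in_nonid_p_subgroups: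
  assumes "group G" "group G'" and \<phi>: "\<phi> \<in> iso G G'" and H: "H \<in> nonid_p_subgroups p G"
  shows "\<phi> ` H \<in> nonid_p_subgroups p G'"
proof -
  interpret group_hom G G' \<phi>
    using assms(1,2) \<phi> by (simp add: group_hom_def group_hom_axioms_def iso_def)
  have sub: "subgroup H G" using H by (simp add: nonid_p_subgroups_def)
  have card: "card (\<phi> ` H) = card H"
    using \<phi> subgroup.subset[OF sub] by (intro card_image) (auto simp: iso_def bij_betw_def intro: inj_on_subset)
  have "\<phi> ` H \<noteq> {\<one>\<^bsub>G'\<^esub>}"
  proof
    assume "\<phi> ` H = {\<one>\<^bsub>G'\<^esub>}"
    then have "card H = 1" using card by simp
    then show False using H subgroup.one_closed[OF sub] by (auto simp: nonid_p_subgroups_def card_1_singleton_iff)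
  qed
  then show ?thesis
    using H card subgroup_img_is_subgroup[OF sub] by (auto simp: nonid_p_subgroups_def)
qed

lemma centralizer_iso_image:
  assumes "monoid G" and \<phi>: "\<phi> \<in> iso G G'" and H: "H \<subseteq> carrier G"
  shows "centralizer G' (\<phi> ` H) = \<phi> ` centralizer G H"
proof -
  interpret monoid G by fact
  have hom: "\<phi> \<in> hom G G'" and bij: "bij_betw \<phi> (carrier G) (carrier G')"
    using \<phi> by (auto simp: iso_def)
  have "x \<otimes>\<^bsub>G\<^esub> h = h \<otimes>\<^bsub>G\<^esub> x \<longleftrightarrow> \<phi> x \<otimes>\<^bsub>G'\<^esub> \<phi> h = \<phi> h \<otimes>\<^bsub>G'\<^esub> \<phi> x"
    if "x \<in> carrier G" "h \<in> H" for x h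
  proof -
    have "h \<in> carrier G" using that H by blast
    then have "\<phi> x \<otimes>\<^bsub>G'\<^esub> \<phi> h = \<phi> (x \<otimes>\<^bsub>G\<^esub> h)" "\<phi> h \<otimes>\<^bsub>G'\<^esub> \<phi> x = \<phi> (h \<otimes>\<^bsub>G\<^esub> x)"
      using that hom_mult[OF hom] by simp_all
    then show ?thesis
      using \<open>h \<in> carrier G\<close> that inj_onD[OF bij_betw_imp_inj_on[OF bij]] by auto
  qed
  note comm = this
  show ?thesis
  proof (intro equalityI subsetI)
    fix y assume y: "y \<in> centralizer G' (\<phi> ` H)"
    then obtain x where x: "x \<in> carrier G" "y = \<phi> x"
      using bij_betw_imp_surj_on[OF bij] by (auto simp: centralizer_def)
    then have "x \<in> centralizer G H"
      using y comm by (auto simp: centralizer_def)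
    then show "y \<in> \<phi> ` centralizer G H" using x by blast
  next
    fix y assume "y \<in> \<phi> ` centralizer G H"
    then obtain x where x: "x \<in> centralizer G H" "y = \<phi> x" by blast
    then have "x \<in> carrier G" by (simp add: centralizer_def)
    then show "y \<in> centralizer G' (\<phi> ` H)"
      using x comm hom_in_carrier[OF hom] by (auto simp: centralizer_def)
  qed
qed

context group begin

lemma subgroup_centralizer:
  assumes H: "H \<subseteq> carrier G"
  shows "subgroup (centralizer G H) G"
proof (rule subgroupI)
  fix a b assume a: "a \<in> centralizer G H" and b: "b \<in> centralizer G H"
  then have ab: "a \<in> carrier G" "b \<in> carrier G" by (auto simp: centralizer_def)
  have "inv a \<otimes> h = h \<otimes> inv a" if "h \<in> H" for h
  proof -
    have h: "h \<in> carrier G" using that H by blast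
    have "inv a \<otimes> h = inv a \<otimes> (h \<otimes> a) \<otimes> inv a" using ab h by (simp add: m_assoc)
    also have "h \<otimes> a = a \<otimes> h" using a that by (simp add: centralizer_def)
    finally show ?thesis using ab h by (simp add: m_assoc[symmetric])
  qed
  then show "inv a \<in> centralizer G H" using ab by (simp add: centralizer_def)
  have "a \<otimes> b \<otimes> h = h \<otimes> (a \<otimes> b)" if "h \<in> H" for h
  proof -
    have h: "h \<in> carrier G" using that H by blast
    have "a \<otimes> b \<otimes> h = a \<otimes> (h \<otimes> b)"
      using a b ab h that by (simp add: centralizer_def m_assoc)
    also have "\<dots> = h \<otimes> (a \<otimes> b)"
      using a ab h that by (simp add: centralizer_def m_assoc[symmetric])
    finally show ?thesis .
  qed
  then show "a \<otimes> b \<in> centralizer G H" using ab by (simp add: centralizer_def)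
qed (use H in \<open>auto simp: centralizer_def intro!: exI[of _ \<one>]\<close>)

lemma card_centralizer_conjugate:
  assumes "g \<in> carrier G" "H \<subseteq> carrier G"
  shows "card (centralizer G (conjugate G g H)) = card (centralizer G H)"
proof -
  have "inj_on (\<lambda>x. inv g \<otimes> x \<otimes> g) (centralizer G H)"
    using assms by (auto simp: inj_on_def centralizer_def)
  then show ?thesis
    using centralizer_iso_image[OF monoid_axioms conjugation_iso] assms
    by (simp add: conjugate_def card_image)
qed

lemma conjugate_subset_iff:
  assumes g: "g \<in> carrier G" and "H \<subseteq> carrier G" "K \<subseteq> carrier G"
  shows "conjugate G g H \<subseteq> K \<longleftrightarrow> H \<subseteq> conjugate G (inv g) K"
proof -
  have undo: "x = inv (inv g) \<otimes> (inv g \<otimes> x \<otimes> g) \<otimes> inv g"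
    "x = inv g \<otimes> (inv (inv g) \<otimes> x \<otimes> inv g) \<otimes> g" if "x \<in> carrier G" for x
    using g that by (simp_all add: m_assoc) (simp_all add: m_assoc[symmetric])
  show ?thesis
  proof
    assume "conjugate G g H \<subseteq> K"
    then show "H \<subseteq> conjugate G (inv g) K"
      using assms undo(1) unfolding conjugate_def by blast
  next
    assume "H \<subseteq> conjugate G (inv g) K"
    then show "conjugate G g H \<subseteq> K"
      using assms undo(2) unfolding conjugate_def by force
  qed
qed

lemma conjugate_mult_centralizer:
  assumes c: "c \<in> centralizer G H" and g: "g \<in> carrier G" and H: "H \<subseteq> carrier G"
  shows "conjugate G (c \<otimes> g) H = conjugate G g H"
proof -
  have cc: "c \<in> carrier G" using c by (simp add: centralizer_def)
  have "inv (c \<otimes> g) \<otimes> h \<otimes> (c \<otimes> g) = inv g \<otimes> h \<otimes> g" if h: "h \<in> H" for h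
  proof -
    have hc: "h \<in> carrier G" using h H by blast
    have "inv (c \<otimes> g) \<otimes> h \<otimes> (c \<otimes> g) = inv g \<otimes> (inv c \<otimes> (h \<otimes> c)) \<otimes> g"
      using cc g hc by (simp add: inv_mult_group m_assoc)
    also have "h \<otimes> c = c \<otimes> h" using c h by (simp add: centralizer_def)
    finally show ?thesis using cc g hc by (simp add: m_assoc[symmetric])
  qed
  then show ?thesis by (simp add: conjugate_def cong: image_cong)
qed

lemma card_transporter:
  assumes fin: "finite (carrier G)" and H: "H \<subseteq> carrier G"
  shows "card (transporter G H K) = Fstar_zeta G H K * card (centralizer G H)"
proof -
  let ?C = "centralizer G H" and ?N = "transporter G H K"
  have C: "subgroup ?C G" using H by (rule subgroup_centralizer)
  have N: "?N \<subseteq> carrier G" by (simp add: transporter_def)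
  have cosets: "Fstar_hom G H K \<subseteq> rcosets ?C"
    using N by (auto simp: Fstar_hom_def RCOSETS_def)
  have "?C #> g \<subseteq> ?N" if "g \<in> ?N" for g
    using that N H conjugate_mult_centralizer subgroup.subset[OF C]
    by (auto simp: r_coset_def transporter_eq)
  then have "\<Union>(Fstar_hom G H K) = ?N"
    using rcos_self[OF _ C] N by (auto simp: Fstar_hom_def) blast
  then have "card ?N = sum card (Fstar_hom G H K)"
    using card_Union_disjoint[OF pairwise_subset[OF rcos_disjoint[OF C] cosets]] fin N
    by (metis Union_upper finite_subset)
  also have "\<dots> = (\<Sum>R\<in>Fstar_hom G H K. card ?C)"
    using cosets card_rcosets_equal[OF _ subgroup.subset[OF C]] by (intro sum.cong) auto
  also have "\<dots> = Fstar_zeta G H K * card ?C"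
    by (simp add: Fstar_zeta_def)
  finally show ?thesis .
qed

lemma conjugate_in_nonid_p_subgroups:
  "g \<in> carrier G \<Longrightarrow> H \<in> nonid_p_subgroups p G \<Longrightarrow> conjugate G g H \<in> nonid_p_subgroups p G"
  unfolding conjugate_def by (rule iso_image_in_nonid_p_subgroups[OF is_group is_group conjugation_iso])

lemma card_centralizer_gt_0:
  "finite (carrier G) \<Longrightarrow> H \<subseteq> carrier G \<Longrightarrow> 0 < card (centralizer G H)"
  using subgroup.finite_imp_card_positive[OF subgroup_centralizer] .

lemma Fstar_zeta_eq:
  assumes fin: "finite (carrier G)" and H: "H \<subseteq> carrier G"
  shows "(of_nat (Fstar_zeta G H K) :: rat)
    = of_nat (card {g \<in> carrier G. conjugate G g H \<subseteq> K}) / of_nat (card (centralizer G H))"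
  using card_transporter[OF fin H, of K] card_centralizer_gt_0[OF fin H]
  by (simp add: transporter_eq field_simps flip: of_nat_mult)

lemma is_weighting_Fstar:
  assumes fin: "finite (carrier G)"
    and k: "\<And>H. H \<in> nonid_p_subgroups p G \<Longrightarrow>
      (\<Sum>K\<in>{K \<in> nonid_p_subgroups p G. H \<subseteq> K}. k K) = of_nat (card (centralizer G H)) / of_nat (order G)"
  shows "is_weighting (nonid_p_subgroups p G) (Fstar_zeta G) k"
  unfolding is_weighting_def
proof
  let ?S = "nonid_p_subgroups p G"
  fix H assume H: "H \<in> ?S"
  then have Hc: "H \<subseteq> carrier G" by (auto simp: nonid_p_subgroups_def dest: subgroup.subset)
  let ?c = "of_nat (card (centralizer G H)) :: rat"
  have S: "finite ?S" using finite_p_subgroups[OF fin] by (simp add: nonid_p_subgroups_eq)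
  have "(\<Sum>K\<in>?S. of_nat (Fstar_zeta G H K) * k K)
      = (\<Sum>K\<in>?S. of_nat (card {g \<in> carrier G. conjugate G g H \<subseteq> K}) * k K) / ?c"
    by (simp add: Fstar_zeta_eq[OF fin Hc] sum_divide_distrib)
  also have "\<dots> = (\<Sum>g\<in>carrier G. \<Sum>K\<in>{K \<in> ?S. conjugate G g H \<subseteq> K}. k K) / ?c"
    by (simp add: sum_card_filter_mult[OF fin S])
  also have "\<dots> = (\<Sum>g\<in>carrier G. ?c / of_nat (order G)) / ?c"
    using k[OF conjugate_in_nonid_p_subgroups[OF _ H]] card_centralizer_conjugate[OF _ Hc]
    by (intro arg_cong[where f="\<lambda>x. x / ?c"] sum.cong) auto
  also have "\<dots> = 1"
    using card_centralizer_gt_0[OF fin Hc] order_gt_0_iff_finite[THEN iffD2, OF fin]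
    by (simp add: order_def)
  finally show "(\<Sum>K\<in>?S. of_nat (Fstar_zeta G H K) * k K) = 1" .
qed

lemma is_coweighting_Fstar:
  assumes fin: "finite (carrier G)"
    and \<mu>: "\<And>K. K \<in> nonid_p_subgroups p G \<Longrightarrow> (\<Sum>H\<in>{H \<in> nonid_p_subgroups p G. H \<subseteq> K}. \<mu> H) = -1"
  shows "is_coweighting (nonid_p_subgroups p G) (Fstar_zeta G)
    (\<lambda>H. - \<mu> H * of_nat (card (centralizer G H)) / of_nat (order G))"
  unfolding is_coweighting_def
proof
  let ?S = "nonid_p_subgroups p G"
  let ?n = "of_nat (order G) :: rat"
  fix K assume K: "K \<in> ?S"
  then have Kc: "K \<subseteq> carrier G" by (auto simp: nonid_p_subgroups_def dest: subgroup.subset)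
  have S: "finite ?S" using finite_p_subgroups[OF fin] by (simp add: nonid_p_subgroups_eq)
  have Sc: "H \<subseteq> carrier G" if "H \<in> ?S" for H
    using that by (auto simp: nonid_p_subgroups_def dest: subgroup.subset)
  have "(\<Sum>H\<in>?S. - \<mu> H * of_nat (card (centralizer G H)) / ?n * of_nat (Fstar_zeta G H K))
      = - (\<Sum>H\<in>?S. of_nat (card {g \<in> carrier G. conjugate G g H \<subseteq> K}) * \<mu> H) / ?n"
  proof -
    have "- \<mu> H * of_nat (card (centralizer G H)) / ?n * of_nat (Fstar_zeta G H K)
        = - (of_nat (card {g \<in> carrier G. conjugate G g H \<subseteq> K}) * \<mu> H) / ?n" if "H \<in> ?S" for H
      using card_centralizer_gt_0[OF fin Sc[OF that]] by (simp add: Fstar_zeta_eq[OF fin Sc[OF that]])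
    then have "(\<Sum>H\<in>?S. - \<mu> H * of_nat (card (centralizer G H)) / ?n * of_nat (Fstar_zeta G H K))
        = (\<Sum>H\<in>?S. - (of_nat (card {g \<in> carrier G. conjugate G g H \<subseteq> K}) * \<mu> H) / ?n)"
      by (rule sum.cong[OF refl])
    then show ?thesis by (simp add: sum_divide_distrib sum_negf)
  qed
  also have "\<dots> = - (\<Sum>g\<in>carrier G. \<Sum>H\<in>{H \<in> ?S. conjugate G g H \<subseteq> K}. \<mu> H) / ?n"
    by (simp add: sum_card_filter_mult[OF fin S])
  also have "\<dots> = - (\<Sum>g\<in>carrier G. -1) / ?n"
  proof -
    have "{H \<in> ?S. conjugate G g H \<subseteq> K} = {H \<in> ?S. H \<subseteq> conjugate G (inv g) K}"
      if "g \<in> carrier G" for g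
      using conjugate_subset_iff[OF that Sc Kc] by auto
    then show ?thesis
      using \<mu>[OF conjugate_in_nonid_p_subgroups[OF _ K]] by (intro arg_cong[where f="\<lambda>x. - x / ?n"] sum.cong) auto
  qed
  also have "\<dots> = 1"
    using order_gt_0_iff_finite[THEN iffD2, OF fin] by (simp add: order_def)
  finally show "(\<Sum>H\<in>?S. - \<mu> H * of_nat (card (centralizer G H)) / ?n * of_nat (Fstar_zeta G H K)) = 1" .
qed

lemma one_minus_chi_Fstar_eq:
  assumes fin: "finite (carrier G)"
    and \<rho>: "\<And>A. A \<in> p_subgroups p G \<Longrightarrow>
      (\<Sum>B\<in>{B \<in> p_subgroups p G. A \<subseteq> B}. \<rho> B) = of_nat (card (centralizer G A))"
  shows "1 - chi_Fstar p G = \<rho> {\<one>} / of_nat (order G)"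
proof -
  let ?P = "p_subgroups p G" and ?S = "nonid_p_subgroups p G"
  let ?n = "of_nat (order G) :: rat" and ?c = "\<lambda>H. of_nat (card (centralizer G H)) :: rat"
  have P: "finite ?P" using fin by (rule finite_p_subgroups)
  have S: "?S = ?P - {{\<one>}}" by (rule nonid_p_subgroups_eq)
  have one: "{\<one>} \<in> ?P" "\<forall>H\<in>?P. {\<one>} \<subseteq> H"
    by (simp_all only: trivial_in_p_subgroups) (simp add: p_subgroups_def subgroup.one_closed)
  obtain \<mu> :: "'a set \<Rightarrow> rat"
    where \<mu>: "\<forall>K\<in>?P. (\<Sum>H\<in>{H \<in> ?P. H \<subseteq> K}. \<mu> H) = (if K = {\<one>} then 1 else 0)"
    using ex_lower_sums_eq[OF P, of "\<lambda>K. if K = {\<one>} then 1 else 0"] by blast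
  obtain k :: "'a set \<Rightarrow> rat" where k: "\<forall>H\<in>?S. (\<Sum>K\<in>{K \<in> ?S. H \<subseteq> K}. k K) = ?c H / ?n"
    using ex_upper_sums_eq[of ?S "\<lambda>H. ?c H / ?n"] P S by auto
  have "chi_Fstar p G = (\<Sum>H\<in>?S. - \<mu> H * ?c H / ?n)"
    unfolding chi_Fstar_def using P S k sum_moebius_above_bottom[OF P one \<mu>]
    by (intro euler_char_eqI is_weighting_Fstar is_coweighting_Fstar fin) auto
  then have chi: "chi_Fstar p G = - (\<Sum>H\<in>?S. \<mu> H * ?c H) / ?n"
    by (simp add: sum_divide_distrib sum_negf)
  have "\<rho> {\<one>} = (\<Sum>H\<in>?P. \<mu> H * ?c H)"
    using sum_moebius_mult_upper_sum[OF P one(1) \<mu>, of \<rho>] \<rho> by (simp cong: sum.cong)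
  also have "\<dots> = ?n + (\<Sum>H\<in>?S. \<mu> H * ?c H)"
  proof -
    have "centralizer G {\<one>} = carrier G" by (auto simp: centralizer_def)
    then show ?thesis
      using moebius_bottom_eq_1[OF P one \<mu>] one P S by (simp add: sum.remove[of ?P "{\<one>}"] order_def)
  qed
  finally show ?thesis
    using chi order_gt_0_iff_finite[THEN iffD2, OF fin] by (simp add: field_simps)
qed


end

section \<open>Direct products\<close>

lemma (in group_hom) card_image_dvd_order: "card (h ` carrier G) dvd order G"
proof -
  let ?H = "H\<lparr>carrier := h ` carrier G\<rparr>"
  have "group ?H"
    using subgroup.subgroup_is_group[OF img_is_subgroup H.is_group] .
  moreover have "h \<in> hom G ?H"
    using homh by (auto simp: hom_def)
  ultimately have hom: "group_hom G ?H h"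
    by (simp add: group_hom_def group_hom_axioms_def G.is_group)
  then have "(\<lambda>C. the_elem (h ` C)) \<in> iso (G Mod (kernel G ?H h)) ?H"
    by (rule group_hom.FactGroup_iso_set) simp
  then have "card (rcosets (kernel G ?H h)) = card (h ` carrier G)"
    by (auto simp: iso_def bij_betw_def FactGroup_def dest: card_image)
  then show ?thesis
    using G.lagrange[OF group_hom.subgroup_kernel[OF hom]] by (metis dvd_triv_left)
qed

lemma (in group_hom) card_image_subgroup_dvd:
  assumes L: "subgroup L G"
  shows "card (h ` L) dvd card L"
proof -
  have "group_hom (subgroup_generated G L) H h"
    using G.group_subgroup_generated H.is_group G.hom_from_subgroup_generated[OF homh]
    by (simp add: group_hom_def group_hom_axioms_def)
  then show ?thesis
    using group_hom.card_image_dvd_order subgroup.carrier_subgroup_generated_subgroup[OF L]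
    by (fastforce simp: order_def)
qed

lemma (in group_hom) image_in_p_subgroups:
  assumes p: "Factorial_Ring.prime p" and L: "L \<in> p_subgroups p G"
  shows "h ` L \<in> p_subgroups p H"
proof -
  obtain k where k: "card L = p ^ k" using L by (auto simp: p_subgroups_def)
  have "card (h ` L) dvd card L"
    using card_image_subgroup_dvd L by (simp add: p_subgroups_def)
  then have "card (h ` L) dvd p ^ k" by (simp only: k)
  then obtain j where "card (h ` L) = p ^ j" using divides_primepow_nat[OF p] by blast
  then show ?thesis using L subgroup_img_is_subgroup by (auto simp: p_subgroups_def)
qed

context
  fixes I :: "'i set" and G :: "'i \<Rightarrow> ('a, 'b) monoid_scheme"
  assumes groups: "\<And>i. i \<in> I \<Longrightarrow> group (G i)"
begin

lemma group_hom_projection: "i \<in> I \<Longrightarrow> group_hom (product_group I G) (G i) (\<lambda>f. f i)"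
  using groups by (auto simp: group_hom_def group_hom_axioms_def hom_def PiE_iff)

lemma PiE_in_p_subgroups:
  assumes "finite I" and \<beta>: "\<beta> \<in> (\<Pi>\<^sub>E i\<in>I. p_subgroups p (G i))"
  shows "PiE I \<beta> \<in> p_subgroups p (product_group I G)"
proof -
  obtain k where k: "\<forall>i\<in>I. card (\<beta> i) = p ^ k i"
    using \<beta> by (simp add: p_subgroups_def PiE_iff) metis
  have "card (PiE I \<beta>) = p ^ (\<Sum>i\<in>I. k i)"
    using k by (simp add: card_PiE[OF \<open>finite I\<close>] power_sum)
  then show ?thesis
    using \<beta> PiE_subgroup_product_group[of I G \<beta>] groups by (auto simp: p_subgroups_def PiE_iff)
qed

end

lemma centralizer_product_group:
  assumes L: "L \<subseteq> carrier (product_group I G)"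
  shows "centralizer (product_group I G) L = (\<Pi>\<^sub>E i\<in>I. centralizer (G i) ((\<lambda>f. f i) ` L))"
proof (intro equalityI subsetI)
  fix g assume g: "g \<in> centralizer (product_group I G) L"
  have "g i \<otimes>\<^bsub>G i\<^esub> l i = l i \<otimes>\<^bsub>G i\<^esub> g i" if "i \<in> I" "l \<in> L" for i l
  proof -
    have "(\<lambda>j\<in>I. g j \<otimes>\<^bsub>G j\<^esub> l j) i = (\<lambda>j\<in>I. l j \<otimes>\<^bsub>G j\<^esub> g j) i"
      using g that(2) by (simp add: centralizer_def)
    then show ?thesis using that(1) by simp
  qed
  then show "g \<in> (\<Pi>\<^sub>E i\<in>I. centralizer (G i) ((\<lambda>f. f i) ` L))"
    using g by (auto simp: centralizer_def PiE_iff)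
next
  fix g assume "g \<in> (\<Pi>\<^sub>E i\<in>I. centralizer (G i) ((\<lambda>f. f i) ` L))"
  then show "g \<in> centralizer (product_group I G) L"
    by (auto simp: centralizer_def PiE_iff intro!: restrict_ext)
qed

definition box_extension ::
    "'i set \<Rightarrow> ('i \<Rightarrow> 'a set set) \<Rightarrow> ('i \<Rightarrow> 'a set \<Rightarrow> 'r::comm_ring_1) \<Rightarrow> ('i \<Rightarrow> 'a) set \<Rightarrow> 'r" where
  "box_extension I \<S> \<rho> B =
     (if B \<in> PiE I ` PiE I \<S> then \<Prod>i\<in>I. \<rho> i ((\<lambda>f. f i) ` B) else 0)"

lemma inj_on_PiE_nonempty:
  assumes "\<forall>i\<in>I. {} \<notin> \<S> i"
  shows "inj_on (PiE I) (PiE I \<S>)"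
proof (rule inj_onI)
  fix \<beta> \<beta>' assume \<beta>: "\<beta> \<in> PiE I \<S>" and \<beta>': "\<beta>' \<in> PiE I \<S>" and eq: "PiE I \<beta> = PiE I \<beta>'"
  have "\<beta> i \<noteq> {} \<and> \<beta>' i \<noteq> {}" if "i \<in> I" for i
    using assms PiE_mem[OF \<beta> that] PiE_mem[OF \<beta>' that] that by fastforce
  then have "\<forall>i\<in>I. \<beta> i = \<beta>' i"
    using eq by (simp add: PiE_eq_iff_not_empty)
  then show "\<beta> = \<beta>'" using \<beta> \<beta>' by (intro PiE_ext) auto
qed

lemma box_extension_PiE:
  assumes "\<forall>i\<in>I. {} \<notin> \<S> i" and \<beta>: "\<beta> \<in> PiE I \<S>"
  shows "box_extension I \<S> \<rho> (PiE I \<beta>) = (\<Prod>i\<in>I. \<rho> i (\<beta> i))"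
proof -
  have "PiE I \<beta> \<noteq> {}"
    unfolding PiE_eq_empty_iff using assms PiE_mem[OF \<beta>] by metis
  then have "(\<lambda>f. f i) ` PiE I \<beta> = \<beta> i" if "i \<in> I" for i
    using that by (simp add: image_projection_PiE)
  moreover have "PiE I \<beta> \<in> PiE I ` PiE I \<S>" using \<beta> by blast
  ultimately show ?thesis by (simp add: box_extension_def cong: prod.cong)
qed

lemma empty_notin_p_subgroups: "{} \<notin> p_subgroups p G"
  by (auto simp: p_subgroups_def dest: subgroup.one_closed)

lemma sum_box_extension_over_boxes:
  assumes I: "finite I"
    and groups: "\<And>i. i \<in> I \<Longrightarrow> group (G i)" and fin: "\<And>i. i \<in> I \<Longrightarrow> finite (carrier (G i))"
  shows "(\<Sum>B\<in>{B \<in> p_subgroups p (product_group I G). L \<subseteq> B}.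
            box_extension I (\<lambda>i. p_subgroups p (G i)) \<rho> B)
         = (\<Sum>\<beta>\<in>{\<beta> \<in> (\<Pi>\<^sub>E i\<in>I. p_subgroups p (G i)). L \<subseteq> PiE I \<beta>}. \<Prod>i\<in>I. \<rho> i (\<beta> i))"
proof -
  let ?X = "product_group I G" and ?\<B> = "\<Pi>\<^sub>E i\<in>I. p_subgroups p (G i)"
  let ?\<psi> = "box_extension I (\<lambda>i. p_subgroups p (G i)) \<rho>"
  let ?boxes = "{\<beta> \<in> ?\<B>. L \<subseteq> PiE I \<beta>}"
  have nonempty: "\<forall>i\<in>I. {} \<notin> p_subgroups p (G i)"
    by (simp add: empty_notin_p_subgroups)
  have "finite (p_subgroups p ?X)"
    using I fin by (intro finite_p_subgroups) (simp add: finite_PiE)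
  moreover have "PiE I ` ?boxes \<subseteq> {B \<in> p_subgroups p ?X. L \<subseteq> B}"
    by (auto intro: PiE_in_p_subgroups[OF groups I])
  moreover have "?\<psi> B = 0" if "B \<in> {B \<in> p_subgroups p ?X. L \<subseteq> B} - PiE I ` ?boxes" for B
  proof -
    have "B \<notin> PiE I ` ?\<B>" using that by blast
    then show ?thesis by (simp add: box_extension_def)
  qed
  ultimately have "(\<Sum>B\<in>{B \<in> p_subgroups p ?X. L \<subseteq> B}. ?\<psi> B) = (\<Sum>B\<in>PiE I ` ?boxes. ?\<psi> B)"
    by (intro sum.mono_neutral_right) auto
  also have "\<dots> = (\<Sum>\<beta>\<in>?boxes. ?\<psi> (PiE I \<beta>))"
    using inj_on_subset[OF inj_on_PiE_nonempty[OF nonempty]] by (simp add: sum.reindex)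
  also have "\<dots> = (\<Sum>\<beta>\<in>?boxes. \<Prod>i\<in>I. \<rho> i (\<beta> i))"
    by (rule sum.cong) (auto intro: box_extension_PiE[OF nonempty])
  finally show ?thesis .
qed

lemma upper_sums_box_extension:
  fixes \<rho> :: "'i \<Rightarrow> 'a set \<Rightarrow> 'r::comm_ring_1"
  assumes I: "finite I" and p: "Factorial_Ring.prime p"
    and groups: "\<And>i. i \<in> I \<Longrightarrow> group (G i)" and fin: "\<And>i. i \<in> I \<Longrightarrow> finite (carrier (G i))"
    and \<rho>: "\<And>i A. i \<in> I \<Longrightarrow> A \<in> p_subgroups p (G i) \<Longrightarrow>
      (\<Sum>B\<in>{B \<in> p_subgroups p (G i). A \<subseteq> B}. \<rho> i B) = of_nat (card (centralizer (G i) A))"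
    and L: "L \<in> p_subgroups p (product_group I G)"
  shows "(\<Sum>B\<in>{B \<in> p_subgroups p (product_group I G). L \<subseteq> B}.
            box_extension I (\<lambda>i. p_subgroups p (G i)) \<rho> B)
         = of_nat (card (centralizer (product_group I G) L))"
proof -
  let ?X = "product_group I G" and ?\<B> = "\<Pi>\<^sub>E i\<in>I. p_subgroups p (G i)"
  have "subgroup L ?X" using L by (simp add: p_subgroups_def)
  then have Lc: "L \<subseteq> carrier ?X" by (rule subgroup.subset)
  have "L \<subseteq> PiE I \<beta> \<longleftrightarrow> (\<forall>i\<in>I. (\<lambda>f. f i) ` L \<subseteq> \<beta> i)" for \<beta>
    using Lc by (fastforce simp: PiE_iff)
  then have boxes: "{\<beta> \<in> ?\<B>. L \<subseteq> PiE I \<beta>}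
      = (\<Pi>\<^sub>E i\<in>I. {A \<in> p_subgroups p (G i). (\<lambda>f. f i) ` L \<subseteq> A})"
    by (auto simp: set_eq_iff PiE_iff)
  have "(\<Sum>B\<in>{B \<in> p_subgroups p ?X. L \<subseteq> B}. box_extension I (\<lambda>i. p_subgroups p (G i)) \<rho> B)
      = (\<Sum>\<beta>\<in>{\<beta> \<in> ?\<B>. L \<subseteq> PiE I \<beta>}. \<Prod>i\<in>I. \<rho> i (\<beta> i))"
    using I groups fin by (rule sum_box_extension_over_boxes)
  also have "\<dots> = (\<Prod>i\<in>I. \<Sum>A\<in>{A \<in> p_subgroups p (G i). (\<lambda>f. f i) ` L \<subseteq> A}. \<rho> i A)"
    unfolding boxes using I fin by (subst prod_sum_PiE) (auto simp: finite_p_subgroups)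
  also have "\<dots> = (\<Prod>i\<in>I. of_nat (card (centralizer (G i) ((\<lambda>f. f i) ` L))))"
    using \<rho> group_hom.image_in_p_subgroups[OF group_hom_projection[OF groups] p L]
    by (intro prod.cong) auto
  also have "\<dots> = of_nat (card (centralizer ?X L))"
    by (simp add: centralizer_product_group[OF Lc] card_PiE[OF I])
  finally show ?thesis .
qed

lemma box_extension_trivial_subgroup:
  assumes "\<And>i. i \<in> I \<Longrightarrow> group (G i)"
  shows "box_extension I (\<lambda>i. p_subgroups p (G i)) \<rho> {\<one>\<^bsub>product_group I G\<^esub>}
    = (\<Prod>i\<in>I. \<rho> i {\<one>\<^bsub>G i\<^esub>})"
proof -
  have trivial: "{\<one>\<^bsub>product_group I G\<^esub>} = PiE I (\<lambda>i\<in>I. {\<one>\<^bsub>G i\<^esub>})"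
    using PiE_singleton[of "\<lambda>i\<in>I. \<one>\<^bsub>G i\<^esub>" I] by (simp cong: PiE_cong)
  have one: "(\<lambda>i\<in>I. {\<one>\<^bsub>G i\<^esub>}) \<in> (\<Pi>\<^sub>E i\<in>I. p_subgroups p (G i))"
    using group.trivial_in_p_subgroups[OF assms] by auto
  have "box_extension I (\<lambda>i. p_subgroups p (G i)) \<rho> {\<one>\<^bsub>product_group I G\<^esub>}
      = (\<Prod>i\<in>I. \<rho> i ((\<lambda>i\<in>I. {\<one>\<^bsub>G i\<^esub>}) i))"
    unfolding trivial by (rule box_extension_PiE[OF _ one]) (simp add: empty_notin_p_subgroups)
  also have "\<dots> = (\<Prod>i\<in>I. \<rho> i {\<one>\<^bsub>G i\<^esub>})"
    by (rule prod.cong) simp_all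
  finally show ?thesis .
qed

theorem one_minus_chi_Fstar_product_group:
  fixes G :: "'i \<Rightarrow> ('a, 'b) monoid_scheme"
  assumes I: "finite I" and p: "Factorial_Ring.prime p"
    and groups: "\<And>i. i \<in> I \<Longrightarrow> group (G i)" and fin: "\<And>i. i \<in> I \<Longrightarrow> finite (carrier (G i))"
  shows "1 - chi_Fstar p (product_group I G) = (\<Prod>i\<in>I. 1 - chi_Fstar p (G i))"
proof -
  let ?X = "product_group I G"
  have "\<forall>i\<in>I. \<exists>\<rho>. \<forall>A\<in>p_subgroups p (G i).
      (\<Sum>B\<in>{B \<in> p_subgroups p (G i). A \<subseteq> B}. \<rho> B) = rat_of_nat (card (centralizer (G i) A))"
    using ex_upper_sums_eq[OF finite_p_subgroups[OF fin]] by (intro ballI)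
  from bchoice[OF this] obtain \<rho> :: "'i \<Rightarrow> 'a set \<Rightarrow> rat" where \<rho>: "\<forall>i\<in>I. \<forall>A\<in>p_subgroups p (G i).
      (\<Sum>B\<in>{B \<in> p_subgroups p (G i). A \<subseteq> B}. \<rho> i B) = of_nat (card (centralizer (G i) A))"
    by blast
  let ?\<psi> = "box_extension I (\<lambda>i. p_subgroups p (G i)) \<rho>"
  have "group ?X" using groups by (rule product_group)
  moreover have "finite (carrier ?X)"
    unfolding carrier_product_group using I fin by (rule finite_PiE)
  moreover have "(\<Sum>B\<in>{B \<in> p_subgroups p ?X. L \<subseteq> B}. ?\<psi> B) = of_nat (card (centralizer ?X L))"
    if "L \<in> p_subgroups p ?X" for L
    using upper_sums_box_extension[OF I p groups fin, where \<rho>=\<rho>] \<rho> that by auto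
  ultimately have "1 - chi_Fstar p ?X = ?\<psi> {\<one>\<^bsub>?X\<^esub>} / of_nat (order ?X)"
    by (rule group.one_minus_chi_Fstar_eq)
  moreover have "?\<psi> {\<one>\<^bsub>?X\<^esub>} = (\<Prod>i\<in>I. \<rho> i {\<one>\<^bsub>G i\<^esub>})"
    using groups by (rule box_extension_trivial_subgroup)
  moreover have "order ?X = (\<Prod>i\<in>I. order (G i))"
    by (simp add: order_def card_PiE[OF I])
  ultimately have "1 - chi_Fstar p ?X
      = (\<Prod>i\<in>I. \<rho> i {\<one>\<^bsub>G i\<^esub>}) / (\<Prod>i\<in>I. of_nat (order (G i)))"
    by (simp only: of_nat_prod)
  also have "\<dots> = (\<Prod>i\<in>I. \<rho> i {\<one>\<^bsub>G i\<^esub>} / of_nat (order (G i)))"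
    by (rule prod_dividef[symmetric])
  also have "\<dots> = (\<Prod>i\<in>I. 1 - chi_Fstar p (G i))"
  proof (rule prod.cong[OF refl])
    fix i assume i: "i \<in> I"
    show "\<rho> i {\<one>\<^bsub>G i\<^esub>} / of_nat (order (G i)) = 1 - chi_Fstar p (G i)"
      using group.one_minus_chi_Fstar_eq[OF groups[OF i] fin[OF i], of p "\<rho> i"] \<rho> i by simp
  qed
  finally show ?thesis .
qed

theorem theorem6p2:
  fixes p n :: nat and G :: "nat \<Rightarrow> ('a, 'b) monoid_scheme"
  assumes "Factorial_Ring.prime p"
    and "\<And>i. i \<in> {1..n} \<Longrightarrow> group (G i)"
    and "\<And>i. i \<in> {1..n} \<Longrightarrow> finite (carrier (G i))"
  shows "1 - chi_Fstar p (product_group {1..n} G) = (\<Prod>i\<in>{1..n}. 1 - chi_Fstar p (G i))"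
  using finite_atLeastAtMost assms by (rule one_minus_chi_Fstar_product_group)

end
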